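(* Let $p$ be an odd prime, $k\in\{-1,1\}$, $n\ge1$, and let $L_n^k(f,p)$ be a Legendre graph of order $n$. Put $q=\lfloor n/p\rfloor$, $r=n-qp$, $\psi=\max\{0,\,2r-p+1\}$, $\delta_s=1$ if $s$ is even and $\delta_s=0$ if $s$ is odd, and $$\mathcal S_1=\sum_{\substack{s=2\\ s\ne p}}^{r+1}(s-1-\delta_s)(s/p),\qquad \mathcal S_2=\sum_{\substack{s=r+2\\ s\ne p}}^{2r}(2r-s+1-\delta_s)(s/p)$$ (empty sums are $0$). Then the number of edges of $L_n^k(f,p)$ equals $$\frac14\left[n^2-n-2nq+pq^2+q-\psi+k(\mathcal S_1+\mathcal S_2)\right].$$ In particular this number does not depend on the bijection $f$.
   Context: For an odd prime $p$ and an integer $a$ not divisible by $p$, $(a/p)$ denotes the Legendre symbol: $1$ if $a$ is a quadratic residue mod $p$, $-1$ otherwise. For $k\in\{-1,1\}$, a Legendre graph $L_n^k(f,p)$ of order $n$ is a simple graph on an $n$-element vertex set $V$ together with a bijection $f:V\to\{1,2,\dots,n\}$, whose edges are exactly the pairs $\{a,b\}$ of distinct vertices with $p\nmid f(a)+f(b)$ and $((f(a)+f(b))/p)=k$. *)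

theory Defs
  imports "HOL-Number_Theory.Number_Theory"
begin

definition legendre_graph_edges :: "'v set \<Rightarrow> ('v \<Rightarrow> int) \<Rightarrow> int \<Rightarrow> int \<Rightarrow> 'v set set" where
  "legendre_graph_edges V f p k =
     {{a, b} | a b. a \<in> V \<and> b \<in> V \<and> a \<noteq> b \<and> \<not> p dvd (f a + f b)
                  \<and> Legendre (f a + f b) p = k}"

definition delta_even :: "int \<Rightarrow> int" where
  "delta_even s = (if even s then 1 else 0)"

end

theory Submission
  imports Defs
begin

(* Four times the number of edges is 2 T(1) - 2 T(D) + k 2 T(L), where T(g) = pair_sum g n sums
   g (x + y) over the pairs 1 <= x < y <= n of labels, D is the indicator of divisibility by p and
   L = (./p), because 2 [p does not divide s and (s/p) = k] = 1 - D s + k L s.  For a p-periodic g,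
   raising the larger element of the pairs by p adds one period sum of g, which reduces T(g) at
   n = q p + r to T(g) at p and at r.  The Legendre symbol has period sum 0, and T(L) at p vanishes
   because the full square sum is a sum of period sums and the diagonal terms (2x/p) run over a
   period; so T(L) at n equals T(L) at r, which is S1 + S2 once the pairs are grouped by their sum.
   For D the period sum is 1 and only the sum s = p contributes to T(D) at p and at r. *)

section \<open>Sums over integer intervals\<close>

lemma sum_Icc_int_shift: "(\<Sum>x\<in>{a..b}. g (x + c)) = (\<Sum>s\<in>{a + c..b + c::int}. g s)"
proof -
  have "(\<Sum>s\<in>{a + c..b + c}. g s) = sum g ((+) c ` {a..b})" by simp
  also have "\<dots> = (\<Sum>x\<in>{a..b}. g (c + x))" by (subst sum.reindex) (auto simp: comp_def)
  finally show ?thesis by (simp add: add.commute)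
qed

lemma sum_Icc_int_split:
  assumes "0 \<le> a" "0 \<le> b"
  shows "(\<Sum>x\<in>{1..a + b}. h x) = (\<Sum>x\<in>{1..a::int}. h x) + (\<Sum>x\<in>{1..b}. h (x + a))"
proof -
  have "{1..a + b} = {1..a} \<union> {a + 1..a + b}" "{1..a} \<inter> {a + 1..a + b} = {}"
    using assms by auto
  then have "(\<Sum>x\<in>{1..a + b}. h x) = (\<Sum>x\<in>{1..a}. h x) + (\<Sum>x\<in>{a + 1..a + b}. h x)"
    by (simp add: sum.union_disjoint)
  then show ?thesis by (simp add: sum_Icc_int_shift add.commute)
qed

lemma sum_Icc_int_insert_top:
  "a \<le> b + 1 \<Longrightarrow> (\<Sum>x\<in>{a..b + 1}. h x) = (\<Sum>x\<in>{a..b::int}. h x) + h (b + 1)"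
  using atLeastAtMostPlus1_int_conv[of a b] by (simp add: add.commute)

lemma sum_Icc_periodic_shift:
  fixes h :: "int \<Rightarrow> 'a::cancel_comm_monoid_add"
  assumes periodic: "\<And>x. 1 \<le> x \<Longrightarrow> h (x + p) = h x" and "0 \<le> p" "0 \<le> c"
  shows "(\<Sum>x\<in>{1..p}. h (x + c)) = (\<Sum>x\<in>{1..p}. h x)"
proof -
  have "(\<Sum>x\<in>{1..c}. h x) + (\<Sum>x\<in>{1..p}. h (x + c)) = (\<Sum>x\<in>{1..c + p}. h x)"
    using sum_Icc_int_split[of c p h] assms(2,3) by simp
  also have "\<dots> = (\<Sum>x\<in>{1..p}. h x) + (\<Sum>x\<in>{1..c}. h (x + p))"
    using sum_Icc_int_split[of p c h] assms(2,3) by (simp add: add.commute)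
  also have "(\<Sum>x\<in>{1..c}. h (x + p)) = (\<Sum>x\<in>{1..c}. h x)"
    using periodic by (intro sum.cong) auto
  finally show ?thesis by (simp add: add.commute)
qed

lemma sum_Icc_quasi_periodic:
  fixes h :: "int \<Rightarrow> int"
  assumes quasi_periodic: "\<And>x. 1 \<le> x \<Longrightarrow> h (x + p) = h x + c"
    and "0 \<le> p" "0 \<le> q" "0 \<le> r"
  shows "2 * (\<Sum>x\<in>{1..q * p + r}. h x)
    = 2 * q * (\<Sum>x\<in>{1..p}. h x) + c * q * (p * (q - 1) + 2 * r) + 2 * (\<Sum>x\<in>{1..r}. h x)"
  using \<open>0 \<le> q\<close>
proof (induction q rule: int_ge_induct)
  case (step q)
  have "(\<Sum>x\<in>{1..(q + 1) * p + r}. h x)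
      = (\<Sum>x\<in>{1..p}. h x) + (\<Sum>x\<in>{1..q * p + r}. h (x + p))"
    using sum_Icc_int_split[of p "q * p + r" h] step.hyps assms(2,4)
    by (simp add: algebra_simps)
  also have "(\<Sum>x\<in>{1..q * p + r}. h (x + p)) = (\<Sum>x\<in>{1..q * p + r}. h x) + c * (q * p + r)"
    using step.hyps assms(2,4) by (simp add: quasi_periodic sum.distrib)
  finally show ?case
    using step.IH by (simp add: algebra_simps)
qed simp

lemma sum_Icc_even_odd:
  "0 \<le> (m::int) \<Longrightarrow> (\<Sum>s\<in>{1..2 * m}. h s) = (\<Sum>x\<in>{1..m}. h (2 * x) + h (2 * x - 1))"
proof (induction m rule: int_ge_induct)
  case (step m)
  have "(\<Sum>s\<in>{1..2 * m + 1 + 1}. h s) = (\<Sum>s\<in>{1..2 * m}. h s) + h (2 * m + 1) + h (2 * m + 1 + 1)"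
    using step.hyps by (simp only: sum_Icc_int_insert_top)
  moreover have "(\<Sum>x\<in>{1..m + 1}. h (2 * x) + h (2 * x - 1))
      = (\<Sum>x\<in>{1..m}. h (2 * x) + h (2 * x - 1)) + (h (2 * (m + 1)) + h (2 * (m + 1) - 1))"
    using step.hyps by (simp only: sum_Icc_int_insert_top)
  moreover have "2 * (m + 1) = 2 * m + 1 + 1" "2 * (m + 1) - 1 = 2 * m + 1"
    by simp_all
  ultimately show ?case
    using step.IH by (simp only:) (simp add: ac_simps)
qed simp

lemma sum_Icc_periodic_double:
  fixes h :: "int \<Rightarrow> int"
  assumes periodic: "\<And>x. h (x + p) = h x" and "odd p" "0 < p"
  shows "(\<Sum>x\<in>{1..p}. h (2 * x)) = (\<Sum>x\<in>{1..p}. h x)"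
proof -
  obtain c where c: "p = 2 * c + 1"
    using \<open>odd p\<close> by (rule oddE)
  have "0 \<le> c"
    using c \<open>0 < p\<close> by linarith
  have odd_arg: "h (2 * x - 1) = h (2 * (x + c))" for x
    using periodic[of "2 * x - 1"] by (simp add: c algebra_simps)
  have double_periodic: "h (2 * (x + p)) = h (2 * x)" for x
    using periodic[of "2 * x + p"] periodic[of "2 * x"] by (simp add: algebra_simps)
  have "(\<Sum>x\<in>{1..p}. h (2 * x - 1)) = (\<Sum>x\<in>{1..p}. h (2 * (x + c)))"
    by (simp add: odd_arg)
  also have "\<dots> = (\<Sum>x\<in>{1..p}. h (2 * x))"
    using sum_Icc_periodic_shift[of "\<lambda>x. h (2 * x)" p c] double_periodic \<open>0 \<le> c\<close> \<open>0 < p\<close>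
    by simp
  finally have odd_part: "(\<Sum>x\<in>{1..p}. h (2 * x - 1)) = (\<Sum>x\<in>{1..p}. h (2 * x))" .
  have "(\<Sum>x\<in>{1..p}. h (2 * x) + h (2 * x - 1)) = (\<Sum>s\<in>{1..2 * p}. h s)"
    using sum_Icc_even_odd[of p h] \<open>0 < p\<close> by simp
  also have "\<dots> = (\<Sum>x\<in>{1..p}. h x) + (\<Sum>x\<in>{1..p}. h (x + p))"
    using sum_Icc_int_split[of p p h] \<open>0 < p\<close> by (simp only: mult_2)
  also have "(\<Sum>x\<in>{1..p}. h (x + p)) = (\<Sum>x\<in>{1..p}. h x)"
    by (simp only: periodic)
  finally show ?thesis
    by (simp add: sum.distrib odd_part)
qed

section \<open>Sums over pairs\<close>

definition pair_sum :: "(int \<Rightarrow> int) \<Rightarrow> int \<Rightarrow> int" where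
  "pair_sum g m = (\<Sum>y\<in>{1..m}. \<Sum>x\<in>{1..y - 1}. g (x + y))"

lemma pair_sum_nonpos [simp]: "m \<le> 0 \<Longrightarrow> pair_sum g m = 0"
  by (simp add: pair_sum_def)

lemma pair_sum_plus_one:
  assumes "0 \<le> m"
  shows "pair_sum g (m + 1) = pair_sum g m + (\<Sum>s\<in>{m + 2..2 * m + 1}. g s)"
proof -
  have "(\<Sum>x\<in>{1..m}. g (x + (m + 1))) = (\<Sum>s\<in>{m + 2..2 * m + 1}. g s)"
    by (simp add: sum_Icc_int_shift algebra_simps)
  then show ?thesis
    using assms by (simp add: pair_sum_def sum_Icc_int_insert_top)
qed

lemma pair_sum_add: "pair_sum (\<lambda>s. u s + v s) m = pair_sum u m + pair_sum v m"
  by (simp add: pair_sum_def sum.distrib)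

lemma pair_sum_diff: "pair_sum (\<lambda>s. u s - v s) m = pair_sum u m - pair_sum v m"
  by (simp add: pair_sum_def sum_subtractf)

lemma pair_sum_cmult: "pair_sum (\<lambda>s. c * u s) m = c * pair_sum u m"
  by (simp add: pair_sum_def sum_distrib_left)

lemma pair_sum_one: "0 \<le> m \<Longrightarrow> 2 * pair_sum (\<lambda>_. 1) m = m\<^sup>2 - m"
proof (induction m rule: int_ge_induct)
  case (step m)
  have "pair_sum (\<lambda>_. 1) (m + 1) = pair_sum (\<lambda>_. 1) m + m"
    using step.hyps by (simp add: pair_sum_plus_one)
  with step.IH show ?case by (simp add: power2_eq_square algebra_simps)
qed simp

text \<open>For \<open>2 \<le> s \<le> 2 * m + 1\<close>, \<open>pair_weight m s\<close> is the number of ordered pairs \<open>(x, y)\<close>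
  in \<open>{1..m}\<^sup>2\<close> with \<open>x \<noteq> y\<close> and \<open>x + y = s\<close>.\<close>
definition pair_weight :: "int \<Rightarrow> int \<Rightarrow> int" where
  "pair_weight m s = (if s \<le> m + 1 then s - 1 - delta_even s else 2 * m - s + 1 - delta_even s)"

lemma pair_weight_plus_one:
  "pair_weight (m + 1) s = pair_weight m s + (if m + 2 \<le> s then 2 else 0)"
  by (auto simp: pair_weight_def)

lemma pair_sum_weighted:
  "0 \<le> m \<Longrightarrow> 2 * pair_sum g m = (\<Sum>s\<in>{2..2 * m + 1}. pair_weight m s * g s)"
proof (induction m rule: int_ge_induct)
  case (step m)
  have top: "pair_weight (m + 1) (2 * m + 2) = 0" "pair_weight (m + 1) (2 * m + 3) = 0"
    using step.hyps by (simp_all add: pair_weight_def delta_even_def)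
  have "{2..2 * (m + 1) + 1} = insert (2 * m + 3) (insert (2 * m + 2) {2..2 * m + 1})"
    using step.hyps by auto
  then have "(\<Sum>s\<in>{2..2 * (m + 1) + 1}. pair_weight (m + 1) s * g s)
      = (\<Sum>s\<in>{2..2 * m + 1}. pair_weight (m + 1) s * g s)"
    using top by simp
  also have "\<dots> = (\<Sum>s\<in>{2..2 * m + 1}. pair_weight m s * g s + (if m + 2 \<le> s then 2 * g s else 0))"
    by (intro sum.cong) (auto simp: pair_weight_plus_one distrib_right)
  also have "\<dots> = 2 * pair_sum g m + (\<Sum>s\<in>{s \<in> {2..2 * m + 1}. m + 2 \<le> s}. 2 * g s)"
    by (simp only: sum.distrib step.IH sum.inter_filter[OF finite_atLeastAtMost_int])
  also have "{s \<in> {2..2 * m + 1}. m + 2 \<le> s} = {m + 2..2 * m + 1}"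
    using step.hyps by auto
  finally show ?case
    by (simp add: pair_sum_plus_one[OF step.hyps] sum_distrib_left)
qed (simp add: pair_weight_def)

lemma pair_weighted_sum_split:
  assumes "0 \<le> m"
  shows "(\<Sum>s\<in>{2..2 * m + 1}. pair_weight m s * g s)
    = (\<Sum>s\<in>{2..m + 1}. (s - 1 - delta_even s) * g s)
      + (\<Sum>s\<in>{m + 2..2 * m}. (2 * m - s + 1 - delta_even s) * g s)"
proof -
  have "{2..2 * m + 1} = {2..m + 1} \<union> {m + 2..2 * m + 1}" "{2..m + 1} \<inter> {m + 2..2 * m + 1} = {}"
    using assms by auto
  then have "(\<Sum>s\<in>{2..2 * m + 1}. pair_weight m s * g s)
      = (\<Sum>s\<in>{2..m + 1}. pair_weight m s * g s) + (\<Sum>s\<in>{m + 2..2 * m + 1}. pair_weight m s * g s)"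
    by (simp add: sum.union_disjoint)
  also have "(\<Sum>s\<in>{2..m + 1}. pair_weight m s * g s) = (\<Sum>s\<in>{2..m + 1}. (s - 1 - delta_even s) * g s)"
    by (intro sum.cong) (auto simp: pair_weight_def)
  also have "(\<Sum>s\<in>{m + 2..2 * m + 1}. pair_weight m s * g s)
      = (\<Sum>s\<in>{m + 2..2 * m + 1}. (2 * m - s + 1 - delta_even s) * g s)"
    by (intro sum.cong) (auto simp: pair_weight_def)
  also have "\<dots> = (\<Sum>s\<in>{m + 2..2 * m}. (2 * m - s + 1 - delta_even s) * g s)"
    by (rule sum.mono_neutral_right) (auto simp: delta_even_def)
  finally show ?thesis .
qed

lemma pair_sum_square:
  "0 \<le> m \<Longrightarrow>
    (\<Sum>x\<in>{1..m}. \<Sum>y\<in>{1..m}. g (x + y)) = 2 * pair_sum g m + (\<Sum>x\<in>{1..m}. g (2 * x))"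
proof (induction m rule: int_ge_induct)
  case (step m)
  have insert_top: "(\<Sum>x\<in>{1..m + 1}. F x) = (\<Sum>x\<in>{1..m}. F x) + F (m + 1)" for F :: "int \<Rightarrow> int"
    using step.hyps by (simp add: sum_Icc_int_insert_top)
  have row: "(\<Sum>x\<in>{1..m}. g (x + (m + 1))) = (\<Sum>s\<in>{m + 2..2 * m + 1}. g s)"
    by (simp add: sum_Icc_int_shift algebra_simps)
  have "(\<Sum>x\<in>{1..m + 1}. \<Sum>y\<in>{1..m + 1}. g (x + y))
      = (\<Sum>x\<in>{1..m}. \<Sum>y\<in>{1..m}. g (x + y)) + (\<Sum>x\<in>{1..m}. g (x + (m + 1)))
        + (\<Sum>y\<in>{1..m}. g (m + 1 + y)) + g (2 * (m + 1))"
    by (simp only: insert_top sum.distrib mult_2 add.assoc)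
  also have "(\<Sum>y\<in>{1..m}. g (m + 1 + y)) = (\<Sum>x\<in>{1..m}. g (x + (m + 1)))"
    by (simp only: add.commute)
  finally show ?case
    using step.IH pair_sum_plus_one[OF step.hyps, of g] insert_top[of "\<lambda>x. g (2 * x)"]
    by (simp only: row) simp
qed simp

lemma pair_sum_periodic:
  assumes periodic: "\<And>x. g (x + p) = g x" and "0 < p" "0 \<le> n"
  shows "2 * pair_sum g n
    = 2 * (n div p) * pair_sum g p + (n div p) * (p * (n div p - 1) + 2 * (n mod p)) * (\<Sum>x\<in>{1..p}. g x)
      + 2 * pair_sum g (n mod p)"
proof -
  define row where "row y = (\<Sum>x\<in>{1..y - 1}. g (x + y))" for y
  have row_shift: "row (y + p) = row y + (\<Sum>x\<in>{1..p}. g x)" if "1 \<le> y" for y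
  proof -
    have "row (y + p) = (\<Sum>x\<in>{1..(y - 1) + p}. g (x + (y + p)))"
      by (simp add: row_def algebra_simps)
    also have "\<dots> = (\<Sum>x\<in>{1..y - 1}. g (x + (y + p))) + (\<Sum>x\<in>{1..p}. g (x + (y - 1) + (y + p)))"
      using sum_Icc_int_split[of "y - 1" p "\<lambda>x. g (x + (y + p))"] that assms(2) by simp
    also have "(\<Sum>x\<in>{1..y - 1}. g (x + (y + p))) = row y"
      using periodic[of "_ + y"] by (simp add: row_def add.assoc)
    also have "(\<Sum>x\<in>{1..p}. g (x + (y - 1) + (y + p))) = (\<Sum>x\<in>{1..p}. g (x + (2 * y - 1 + p)))"
      by (simp add: algebra_simps)
    also have "(\<Sum>x\<in>{1..p}. g (x + (2 * y - 1 + p))) = (\<Sum>x\<in>{1..p}. g x)"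
      using sum_Icc_periodic_shift[of g p "2 * y - 1 + p"] periodic that assms(2) by simp
    finally show ?thesis .
  qed
  have "pair_sum g m = sum row {1..m}" for m
    by (simp add: pair_sum_def row_def)
  with sum_Icc_quasi_periodic[of row p _ "n div p" "n mod p"] row_shift assms(2,3) show ?thesis
    by (simp add: pos_imp_zdiv_nonneg_iff)
qed

section \<open>Legendre symbol sums\<close>

lemma Legendre_add_period: "Legendre (x + p) p = Legendre x p"
  by (simp add: Legendre_def QuadRes_def cong_def)

lemma Legendre_dvd: "p dvd a \<Longrightarrow> Legendre a p = 0"
  by (simp add: Legendre_def cong_0_iff)

lemma quadratic_residues_eq_half_squares:
  fixes p :: int
  assumes "prime p" "odd p"
  shows "{a \<in> {1..p - 1}. QuadRes p a} = (\<lambda>y. y\<^sup>2 mod p) ` {1..(p - 1) div 2}"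
proof (intro equalityI subsetI)
  fix a assume "a \<in> {a \<in> {1..p - 1}. QuadRes p a}"
  then obtain y where a: "1 \<le> a" "a < p" and "[y\<^sup>2 = a] (mod p)"
    by (auto simp: QuadRes_def)
  define z where "z = y mod p"
  have p_pos: "0 < p"
    using assms(1) prime_gt_0_int by blast
  have z_sq: "z\<^sup>2 mod p = a"
    using \<open>[y\<^sup>2 = a] (mod p)\<close> a by (simp add: z_def cong_def power_mod)
  have "0 \<le> z" "z < p"
    using p_pos by (simp_all add: z_def)
  moreover have "z \<noteq> 0"
    using z_sq a by auto
  ultimately have "0 < z" "z < p"
    by simp_all
  have "(p - z)\<^sup>2 = z\<^sup>2 + p * (p - 2 * z)"
    by (simp add: power2_eq_square algebra_simps)
  then have "(p - z)\<^sup>2 mod p = a"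
    using z_sq by simp
  have "p = 2 * ((p - 1) div 2) + 1"
    using assms(2) by presburger
  show "a \<in> (\<lambda>y. y\<^sup>2 mod p) ` {1..(p - 1) div 2}"
  proof (cases "z \<le> (p - 1) div 2")
    case True
    with z_sq \<open>0 < z\<close> show ?thesis
      by (intro image_eqI[of a _ z]) auto
  next
    case False
    with \<open>(p - z)\<^sup>2 mod p = a\<close> \<open>p = 2 * ((p - 1) div 2) + 1\<close> \<open>z < p\<close> show ?thesis
      by (intro image_eqI[of a _ "p - z"]) auto
  qed
next
  fix a assume "a \<in> (\<lambda>y. y\<^sup>2 mod p) ` {1..(p - 1) div 2}"
  then obtain y where y: "1 \<le> y" "y < p" and a: "a = y\<^sup>2 mod p"
    by force
  have "\<not> p dvd y"
    using y zdvd_imp_le by fastforce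
  then have "\<not> p dvd y\<^sup>2"
    using assms(1) prime_dvd_power by blast
  then have "a \<noteq> 0" "0 \<le> a" "a < p"
    using a y by (auto simp: dvd_eq_mod_eq_0)
  moreover have "QuadRes p a"
    unfolding QuadRes_def cong_def a by auto
  ultimately show "a \<in> {a \<in> {1..p - 1}. QuadRes p a}"
    by simp
qed

lemma inj_on_square_mod_half:
  fixes p :: int
  assumes "prime p"
  shows "inj_on (\<lambda>y. y\<^sup>2 mod p) {1..(p - 1) div 2}"
proof
  fix x y assume x: "x \<in> {1..(p - 1) div 2}" and y: "y \<in> {1..(p - 1) div 2}"
    and "x\<^sup>2 mod p = y\<^sup>2 mod p"
  then have "p dvd (x - y) * (x + y)"
    by (simp add: mod_eq_dvd_iff power2_eq_square algebra_simps)
  have "2 * ((p - 1) div 2) \<le> p - 1"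
    by linarith
  then have "0 < x + y" "x + y < p" "\<bar>x - y\<bar> < p"
    using x y by auto
  then have "\<not> p dvd (x + y)"
    using zdvd_imp_le by fastforce
  with \<open>p dvd (x - y) * (x + y)\<close> have "p dvd x - y"
    using assms prime_dvd_mult_iff by blast
  with \<open>\<bar>x - y\<bar> < p\<close> show "x = y"
    using dvd_imp_le_int[of "x - y" p] by fastforce
qed

lemma card_quadratic_residues:
  fixes p :: int
  assumes "prime p" "odd p"
  shows "card {a \<in> {1..p - 1}. QuadRes p a} = nat ((p - 1) div 2)"
  unfolding quadratic_residues_eq_half_squares[OF assms]
  using card_image[OF inj_on_square_mod_half[OF assms(1)]] by simp

lemma sum_Legendre_period:
  fixes p :: int
  assumes "prime p" "odd p"
  shows "(\<Sum>x\<in>{1..p}. Legendre x p) = 0"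
proof -
  have "1 \<le> p"
    using prime_gt_0_int[OF assms(1)] by linarith
  then have "(\<Sum>x\<in>{1..p}. Legendre x p) = (\<Sum>x\<in>{1..p - 1}. Legendre x p)"
    using sum_Icc_int_insert_top[of 1 "p - 1" "\<lambda>x. Legendre x p"] by (simp add: Legendre_dvd)
  also have "\<dots> = (\<Sum>x\<in>{1..p - 1}. 2 * of_bool (QuadRes p x) - 1)"
    by (intro sum.cong) (auto simp: Legendre_def cong_0_iff zdvd_not_zless)
  also have "\<dots> = 2 * int (card {a \<in> {1..p - 1}. QuadRes p a}) - (p - 1)"
    using \<open>1 \<le> p\<close> by (simp add: sum_subtractf sum_distrib_left[symmetric] Int_def)
  also have "\<dots> = 0"
  proof -
    have "2 * ((p - 1) div 2) = p - 1"
      using assms(2) by presburger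
    then show ?thesis
      using card_quadratic_residues[OF assms] \<open>1 \<le> p\<close> by simp
  qed
  finally show ?thesis .
qed

lemma pair_sum_Legendre_period:
  fixes p :: int
  assumes "prime p" "odd p"
  shows "pair_sum (\<lambda>s. Legendre s p) p = 0"
proof -
  have "0 < p"
    using assms(1) prime_gt_0_int by blast
  have "(\<Sum>y\<in>{1..p}. Legendre (x + y) p) = 0" if "x \<in> {1..p}" for x
    using sum_Icc_periodic_shift[of "\<lambda>s. Legendre s p" p x] that \<open>0 < p\<close>
    by (simp add: Legendre_add_period sum_Legendre_period[OF assms] add.commute)
  moreover have "(\<Sum>x\<in>{1..p}. Legendre (2 * x) p) = 0"
    using sum_Icc_periodic_double[of "\<lambda>s. Legendre s p" p] assms(2) \<open>0 < p\<close>
    by (simp add: Legendre_add_period sum_Legendre_period[OF assms])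
  ultimately show ?thesis
    using pair_sum_square[of p "\<lambda>s. Legendre s p"] \<open>0 < p\<close> by simp
qed

lemma pair_sum_Legendre_mod:
  fixes p n :: int
  assumes "prime p" "odd p" "0 \<le> n"
  shows "pair_sum (\<lambda>s. Legendre s p) n = pair_sum (\<lambda>s. Legendre s p) (n mod p)"
  using pair_sum_periodic[of "\<lambda>s. Legendre s p" p n] prime_gt_0_int[OF assms(1)] assms(3)
  by (simp add: Legendre_add_period sum_Legendre_period[OF assms(1,2)]
      pair_sum_Legendre_period[OF assms(1,2)])

lemma Legendre_indicator:
  assumes "k \<in> {-1, 1}"
  shows "2 * of_bool (\<not> p dvd s \<and> Legendre s p = k) = 1 - of_bool (p dvd s) + k * Legendre s p"
  using assms by (auto simp: Legendre_def cong_0_iff)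

section \<open>Pairs whose sum is divisible by \<open>p\<close>\<close>

lemma dvd_iff_eq_below_double:
  fixes p s :: int
  assumes "0 < s" "s < 2 * p"
  shows "p dvd s \<longleftrightarrow> s = p"
proof
  assume "p dvd s"
  show "s = p"
  proof (rule ccontr)
    assume "s \<noteq> p"
    have "p \<le> s"
      using \<open>p dvd s\<close> \<open>0 < s\<close> by (rule zdvd_imp_le)
    moreover have "p dvd s - p"
      using \<open>p dvd s\<close> by simp
    ultimately have "p \<le> s - p"
      using \<open>s \<noteq> p\<close> by (intro zdvd_imp_le) auto
    with assms(2) show False
      by simp
  qed
qed simp

lemma sum_dvd_indicator_period:
  fixes p :: int
  assumes "0 < p"
  shows "(\<Sum>x\<in>{1..p}. of_bool (p dvd x) :: int) = 1"
proof -
  have "(\<Sum>x\<in>{1..p}. of_bool (p dvd x) :: int) = (\<Sum>x\<in>{1..p}. if x = p then 1 else 0)"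
    using assms by (intro sum.cong) (auto simp: dvd_iff_eq_below_double)
  then show ?thesis
    using assms by simp
qed

lemma pair_sum_dvd_below_period:
  fixes p m :: int
  assumes "odd p" "0 \<le> m" "m < p"
  shows "2 * pair_sum (\<lambda>s. of_bool (p dvd s)) m = max 0 (2 * m - p + 1)"
proof -
  have "2 * pair_sum (\<lambda>s. of_bool (p dvd s)) m
      = (\<Sum>s\<in>{2..2 * m + 1}. pair_weight m s * of_bool (p dvd s))"
    using assms(2) by (rule pair_sum_weighted)
  also have "\<dots> = (\<Sum>s\<in>{2..2 * m + 1}. if s = p then pair_weight m p else 0)"
    using assms(3) by (intro sum.cong) (auto simp: dvd_iff_eq_below_double)
  also have "\<dots> = max 0 (2 * m - p + 1)"
    using assms by (auto simp: pair_weight_def delta_even_def)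
  finally show ?thesis .
qed

lemma pair_sum_dvd:
  fixes p n :: int
  assumes "odd p" "0 < p" "0 \<le> n"
  defines "q \<equiv> n div p" and "r \<equiv> n mod p"
  shows "2 * pair_sum (\<lambda>s. of_bool (p dvd s)) n = 2 * n * q - p * q\<^sup>2 - q + max 0 (2 * r - p + 1)"
proof -
  let ?D = "\<lambda>s. of_bool (p dvd s) :: int"
  have "(\<Sum>s\<in>{p - 1 + 2..2 * (p - 1) + 1}. ?D s) = 0"
    by (intro sum.neutral) (auto simp: dvd_iff_eq_below_double)
  then have "pair_sum ?D p = pair_sum ?D (p - 1)"
    using pair_sum_plus_one[of "p - 1" ?D] assms(2) by simp
  then have full_period: "2 * pair_sum ?D p = p - 1"
    using pair_sum_dvd_below_period[of p "p - 1"] assms(1,2) by simp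
  have "0 \<le> q" "0 \<le> r" "r < p" "n = q * p + r"
    using assms(2,3) by (simp_all add: q_def r_def pos_imp_zdiv_nonneg_iff)
  moreover have "2 * pair_sum ?D r = max 0 (2 * r - p + 1)"
    using pair_sum_dvd_below_period assms(1) \<open>0 \<le> r\<close> \<open>r < p\<close> by blast
  ultimately show ?thesis
    using pair_sum_periodic[of ?D p n] assms(2,3) full_period sum_dvd_indicator_period[OF assms(2)]
    unfolding q_def[symmetric] r_def[symmetric]
    by (simp add: power2_eq_square algebra_simps)
qed

section \<open>Counting edges\<close>

lemma card_edges_of_injective_labelling:
  fixes f :: "'v \<Rightarrow> 'a::linorder"
  assumes "inj_on f V" and symmetric: "\<And>x y. R x y \<longleftrightarrow> R y x"
  shows "card {{a, b} | a b. a \<in> V \<and> b \<in> V \<and> a \<noteq> b \<and> R (f a) (f b)}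
    = card {(x, y). x \<in> f ` V \<and> y \<in> f ` V \<and> x < y \<and> R x y}"
proof -
  define P where "P = {(a, b). a \<in> V \<and> b \<in> V \<and> f a < f b \<and> R (f a) (f b)}"
  have "{{a, b} | a b. a \<in> V \<and> b \<in> V \<and> a \<noteq> b \<and> R (f a) (f b)} = (\<lambda>(a, b). {a, b}) ` P"
  proof (intro equalityI subsetI)
    fix e assume "e \<in> {{a, b} | a b. a \<in> V \<and> b \<in> V \<and> a \<noteq> b \<and> R (f a) (f b)}"
    then obtain a b where e: "e = {a, b}" "a \<in> V" "b \<in> V" "a \<noteq> b" "R (f a) (f b)"
      by blast
    then have "f a \<noteq> f b"
      using \<open>inj_on f V\<close> by (auto dest: inj_onD)
    then have "(a, b) \<in> P \<or> (b, a) \<in> P"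
      using e symmetric by (auto simp: P_def neq_iff)
    then show "e \<in> (\<lambda>(a, b). {a, b}) ` P"
      using e by (auto intro: image_eqI[of _ _ "(b, a)"])
  qed (auto simp: P_def)
  moreover have "inj_on (\<lambda>(a, b). {a, b}) P"
    by (auto simp: inj_on_def P_def doubleton_eq_iff)
  moreover have "inj_on (map_prod f f) P"
    using \<open>inj_on f V\<close> by (auto simp: inj_on_def P_def)
  moreover have "map_prod f f ` P = {(x, y). x \<in> f ` V \<and> y \<in> f ` V \<and> x < y \<and> R x y}"
    by (auto simp: P_def)
  ultimately show ?thesis
    by (metis card_image)
qed

lemma card_ordered_pairs_eq_pair_sum:
  "int (card {(x, y). x \<in> {1..m} \<and> y \<in> {1..m} \<and> x < y \<and> P (x + y)})
    = pair_sum (\<lambda>s. of_bool (P s)) m"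
proof -
  have "{(x, y). x \<in> {1..m} \<and> y \<in> {1..m} \<and> x < y \<and> P (x + y)}
      = prod.swap ` (SIGMA y:{1..m}. {x \<in> {1..y - 1}. P (x + y)})"
    by force
  then have "card {(x, y). x \<in> {1..m} \<and> y \<in> {1..m} \<and> x < y \<and> P (x + y)}
      = card (SIGMA y:{1..m}. {x \<in> {1..y - 1}. P (x + y)})"
    by (simp only: card_image[OF inj_swap])
  also have "\<dots> = (\<Sum>y\<in>{1..m}. card {x \<in> {1..y - 1}. P (x + y)})"
    by (intro card_SigmaI ballI finite_Collect_conjI disjI1) simp_all
  finally show ?thesis
    by (simp add: pair_sum_def Int_def)
qed

lemma twice_card_legendre_graph_edges:
  assumes "bij_betw f V {1..n}" "k \<in> {-1, 1}"
  shows "2 * int (card (legendre_graph_edges V f p k))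
    = pair_sum (\<lambda>s. 1 - of_bool (p dvd s) + k * Legendre s p) n"
proof -
  let ?P = "\<lambda>s. \<not> p dvd s \<and> Legendre s p = k"
  have "card (legendre_graph_edges V f p k)
      = card {(x, y). x \<in> {1..n} \<and> y \<in> {1..n} \<and> x < y \<and> ?P (x + y)}"
    using card_edges_of_injective_labelling[of f V "\<lambda>x y. ?P (x + y)"] assms(1)
    by (simp add: legendre_graph_edges_def bij_betw_def add.commute)
  then show ?thesis
    using card_ordered_pairs_eq_pair_sum[of n ?P]
    by (simp add: Legendre_indicator[OF assms(2)] flip: pair_sum_cmult)
qed

theorem lemma3p2:
  fixes p k n :: int and V :: "'v set" and f :: "'v \<Rightarrow> int"
  assumes "prime p" and "odd p" and "k \<in> {-1, 1}" and "n \<ge> 1"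
    and "bij_betw f V {1..n}"
  defines "q \<equiv> n div p"
  defines "r \<equiv> n - q * p"
  defines "\<psi> \<equiv> max 0 (2 * r - p + 1)"
  defines "S1 \<equiv> (\<Sum>s \<in> {2..r+1} - {p}. (s - 1 - delta_even s) * Legendre s p)"
  defines "S2 \<equiv> (\<Sum>s \<in> {r+2..2*r} - {p}. (2 * r - s + 1 - delta_even s) * Legendre s p)"
  shows "real (card (legendre_graph_edges V f p k)) =
           real_of_int (n^2 - n - 2*n*q + p*q^2 + q - \<psi> + k * (S1 + S2)) / 4"
proof -
  let ?E = "legendre_graph_edges V f p k"
  let ?L = "\<lambda>s. Legendre s p"
  have "0 < p" "0 \<le> n"
    using prime_gt_0_int[OF assms(1)] assms(4) by simp_all
  have r: "r = n mod p" "0 \<le> r"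
    using \<open>0 < p\<close> by (simp_all add: r_def q_def minus_div_mult_eq_mod)
  have "4 * int (card ?E)
      = 2 * pair_sum (\<lambda>_. 1) n - 2 * pair_sum (\<lambda>s. of_bool (p dvd s)) n + k * (2 * pair_sum ?L r)"
    using twice_card_legendre_graph_edges[OF assms(5,3), of p]
      pair_sum_Legendre_mod[OF assms(1,2) \<open>0 \<le> n\<close>] r
    by (simp add: pair_sum_add pair_sum_diff pair_sum_cmult algebra_simps)
  also have "2 * pair_sum ?L r = S1 + S2"
    using pair_sum_weighted[OF \<open>0 \<le> r\<close>] pair_weighted_sum_split[OF \<open>0 \<le> r\<close>]
    by (simp add: S1_def S2_def sum_diff1 Legendre_dvd)
  finally have "4 * int (card ?E) = n^2 - n - 2*n*q + p*q^2 + q - \<psi> + k * (S1 + S2)"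
    using pair_sum_one[OF \<open>0 \<le> n\<close>] pair_sum_dvd[OF assms(2) \<open>0 < p\<close> \<open>0 \<le> n\<close>] r
    by (simp add: q_def \<psi>_def)
  then have "4 * real (card ?E) = real_of_int (n^2 - n - 2*n*q + p*q^2 + q - \<psi> + k * (S1 + S2))"
    by (metis of_int_mult of_int_numeral of_int_of_nat_eq)
  then show ?thesis
    by (metis mult.commute nonzero_eq_divide_eq zero_neq_numeral)
qed

end
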